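(* Let $K\le N$ and for $\mathbf{X}\in\mathbb{R}^{N\times K}$ define $$\ell_{\mathrm{om}}(\mathbf{X})=K\|\mathbf{X}^{\mathrm T}\mathbf{X}\|_{\mathrm F}^2-\|\mathbf{X}\|_{\mathrm F}^4.$$ If $\mathbf{X}=\mathbf{U}\mathbf{S}\mathbf{V}^{\mathrm T}$ is a singular value decomposition of $\mathbf{X}$ with singular values $S_{1,1},\dots,S_{K,K}$, then $$\ell_{\mathrm{om}}(\mathbf{X})=K\sum_{k=1}^K S_{k,k}^4-\Big(\sum_{k=1}^K S_{k,k}^2\Big)^2.$$ Moreover, $\ell_{\mathrm{om}}(\mathbf{X})\ge0$ for all $\mathbf{X}$, and $\ell_{\mathrm{om}}(\mathbf{X})=0$ if and only if $\mathbf{X}^{\mathrm T}\mathbf{X}=\alpha\mathbf{I}_K$ for some $\alpha\ge0$ (i.e., the columns of $\mathbf{X}$ are pairwise orthogonal and of equal length). Furthermore, $\ell_{\mathrm{om}}$ has no spurious stationary points: $\nabla_{\mathbf{X}}\ell_{\mathrm{om}}(\mathbf{X})=\mathbf{0}$ holds only if $\mathbf{X}^{\mathrm T}\mathbf{X}=\alpha\mathbf{I}_K$ for some $\alpha\ge0$.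
   Context: $\|\cdot\|_{\mathrm F}$ denotes the Frobenius norm and $\mathbf{I}_K$ the $K\times K$ identity matrix. A spurious stationary point of a differentiable function whose zero set is $\mathcal{X}$ is a point outside $\mathcal{X}$ where the gradient vanishes. *)

theory Defs
  imports "HOL-Analysis.Analysis"
begin

definition frob_norm :: "real^'n^'m \<Rightarrow> real" where
  "frob_norm A = sqrt (\<Sum>i\<in>UNIV. \<Sum>j\<in>UNIV. (A$i$j)^2)"

definition l_om :: "real^'k^'n \<Rightarrow> real" where
  "l_om X = real CARD('k) * (frob_norm (transpose X ** X))^2 - (frob_norm X)^4"

definition is_svd :: "real^'k^'n \<Rightarrow> real^'k^'n \<Rightarrow> real^'k^'k \<Rightarrow> real^'k^'k \<Rightarrow> bool" where
  "is_svd X U S V \<longleftrightarrow>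
     transpose U ** U = mat 1 \<and>
     transpose V ** V = mat 1 \<and> V ** transpose V = mat 1 \<and>
     (\<forall>i j. i \<noteq> j \<longrightarrow> S$i$j = 0) \<and> (\<forall>k. S$k$k \<ge> 0) \<and>
     X = U ** S ** transpose V"

end

theory Submission
  imports Defs
begin

(* With G = X^T X, the loss is K ||G||_F^2 - (tr G)^2, and for any square matrix A the gap
   K ||A||_F^2 - (tr A)^2 equals K times the sum of the squared off-diagonal entries plus half
   the sum of the squared differences of diagonal entries.  Hence the loss is nonnegative and
   vanishes exactly when G is a multiple of the identity.  The loss is homogeneous of degree 4,
   so by Euler's identity its derivative at X in direction X is 4 l_om(X): at a stationary point
   the loss is zero, hence a global minimum.  For an SVD, G = V S^2 V^T and traces are
   invariant under orthogonal conjugation. *)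

lemma has_derivative_homogeneous_self:
  fixes f :: "'a::real_normed_vector \<Rightarrow> real"
  assumes homogeneous: "\<And>t. f (t *\<^sub>R x) = t ^ n * f x"
    and deriv: "(f has_derivative f') (at x)"
  shows "f' x = real n * f x"
proof -
  have ray: "((\<lambda>t. t *\<^sub>R x) has_derivative (\<lambda>s. s *\<^sub>R x)) (at 1)"
    by (intro derivative_eq_intros) auto
  have "((\<lambda>t. f (t *\<^sub>R x)) has_derivative (\<lambda>s. f' (s *\<^sub>R x))) (at 1)"
    using diff_chain_at[OF ray] deriv by (simp add: o_def)
  moreover have "((\<lambda>t. f (t *\<^sub>R x)) has_derivative (\<lambda>s. s * (real n * f x))) (at 1)"
    unfolding homogeneous by (auto intro!: derivative_eq_intros)
  ultimately have "(\<lambda>s. f' (s *\<^sub>R x)) = (\<lambda>s. s * (real n * f x))"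
    by (rule has_derivative_unique)
  from fun_cong[OF this, of 1] show ?thesis by simp
qed

lemma gderiv_zero_imp_homogeneous_zero:
  fixes f :: "'a::real_inner \<Rightarrow> real"
  assumes "\<And>t. f (t *\<^sub>R x) = t ^ n * f x" and "n > 0" and "GDERIV f x :> 0"
  shows "f x = 0"
proof -
  have "(f has_derivative (\<lambda>h. h \<bullet> 0)) (at x)"
    using assms(3) by (simp add: gderiv_def)
  from has_derivative_homogeneous_self[OF assms(1) this] show ?thesis
    using assms(2) by simp
qed

lemma frob_norm_power2: "(frob_norm A)^2 = (\<Sum>i\<in>UNIV. \<Sum>j\<in>UNIV. (A$i$j)^2)"
  unfolding frob_norm_def by (simp add: sum_nonneg)

lemma frob_norm_power2_eq_trace: "(frob_norm A)^2 = trace (transpose A ** A)"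
  unfolding frob_norm_power2 trace_def
  by (subst sum.swap) (simp add: matrix_matrix_mult_def transpose_def power2_eq_square)

lemma frob_norm_scaleR: "frob_norm (c *\<^sub>R A) = \<bar>c\<bar> * frob_norm A"
  unfolding frob_norm_def
  by (simp add: power_mult_distrib sum_distrib_left[symmetric] real_sqrt_mult)

lemma transpose_mult_self_scaleR:
  fixes A :: "real^'m^'n"
  shows "transpose (c *\<^sub>R A) ** (c *\<^sub>R A) = c^2 *\<^sub>R (transpose A ** A)"
  by (simp add: vec_eq_iff matrix_matrix_mult_def transpose_def sum_distrib_left
      power2_eq_square mult_ac)

lemma l_om_scaleR: "l_om (c *\<^sub>R X) = c^4 * l_om X"
proof -
  have "\<bar>c\<bar>^4 = c^4"
    by simp
  then show ?thesis
    unfolding l_om_def transpose_mult_self_scaleR frob_norm_scaleR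
    by (simp add: power_mult_distrib algebra_simps)
qed

lemma l_om_gram:
  fixes X :: "real^'k^'n"
  defines "G \<equiv> transpose X ** X"
  shows "l_om X = real CARD('k) * (frob_norm G)^2 - (trace G)^2"
proof -
  have "(frob_norm X)^4 = ((frob_norm X)^2)^2" by simp
  then show ?thesis
    unfolding l_om_def G_def frob_norm_power2_eq_trace[of X] by simp
qed

lemma gram_diag_nonneg:
  fixes X :: "real^'k^'n"
  shows "(transpose X ** X)$i$i \<ge> 0"
  by (simp add: matrix_matrix_mult_def transpose_def sum_nonneg)

lemma sum_pairwise_diff_squares:
  fixes a :: "'k::finite \<Rightarrow> real"
  shows "(\<Sum>i\<in>UNIV. \<Sum>j\<in>UNIV. (a i - a j)^2)
           = 2 * real CARD('k) * (\<Sum>i\<in>UNIV. (a i)^2) - 2 * (\<Sum>i\<in>UNIV. a i)^2"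
proof -
  have "(\<Sum>i\<in>UNIV. \<Sum>j\<in>UNIV. (a i - a j)^2)
          = (\<Sum>i\<in>UNIV. \<Sum>j\<in>UNIV. (a i)^2 + (a j)^2 - 2 * (a i * a j))"
    by (simp add: power2_diff algebra_simps)
  also have "\<dots> = 2 * real CARD('k) * (\<Sum>i\<in>UNIV. (a i)^2) - 2 * (\<Sum>i\<in>UNIV. \<Sum>j\<in>UNIV. a i * a j)"
    by (simp add: sum.distrib sum_subtractf sum_distrib_left[symmetric])
  also have "(\<Sum>i\<in>UNIV. \<Sum>j\<in>UNIV. a i * a j) = (\<Sum>i\<in>UNIV. a i)^2"
    by (simp add: power2_eq_square sum_product)
  finally show ?thesis .
qed

lemma card_frob_norm_minus_trace_power2:
  fixes A :: "real^'k^'k"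
  shows "real CARD('k) * (frob_norm A)^2 - (trace A)^2
           = real CARD('k) * (\<Sum>i\<in>UNIV. \<Sum>j\<in>UNIV-{i}. (A$i$j)^2)
             + (\<Sum>i\<in>UNIV. \<Sum>j\<in>UNIV. (A$i$i - A$j$j)^2) / 2"
proof -
  have "(\<Sum>j\<in>UNIV. (A$i$j)^2) = (A$i$i)^2 + (\<Sum>j\<in>UNIV-{i}. (A$i$j)^2)" for i
    by (simp add: sum.remove)
  then have "(frob_norm A)^2 = (\<Sum>i\<in>UNIV. (A$i$i)^2) + (\<Sum>i\<in>UNIV. \<Sum>j\<in>UNIV-{i}. (A$i$j)^2)"
    by (simp add: frob_norm_power2 sum.distrib)
  then show ?thesis
    unfolding sum_pairwise_diff_squares[of "\<lambda>i. A$i$i"] trace_def by (simp add: field_simps)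
qed

lemma trace_power2_le_card_frob_norm:
  fixes A :: "real^'k^'k"
  shows "(trace A)^2 \<le> real CARD('k) * (frob_norm A)^2"
proof -
  have "0 \<le> real CARD('k) * (\<Sum>i\<in>UNIV. \<Sum>j\<in>UNIV-{i}. (A$i$j)^2)
             + (\<Sum>i\<in>UNIV. \<Sum>j\<in>(UNIV::'k set). (A$i$i - A$j$j)^2) / 2"
    by (intro add_nonneg_nonneg mult_nonneg_nonneg divide_nonneg_pos sum_nonneg) auto
  then show ?thesis
    using card_frob_norm_minus_trace_power2[of A] by linarith
qed

lemma trace_power2_eq_card_frob_norm_iff:
  fixes A :: "real^'k^'k"
  shows "(trace A)^2 = real CARD('k) * (frob_norm A)^2 \<longleftrightarrow> (\<exists>\<alpha>. A = \<alpha> *\<^sub>R mat 1)"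
proof
  define off where "off = (\<Sum>i\<in>UNIV. \<Sum>j\<in>UNIV-{i}. (A$i$j)^2)"
  define spread where "spread = (\<Sum>i\<in>UNIV. \<Sum>j\<in>(UNIV::'k set). (A$i$i - A$j$j)^2)"
  assume "(trace A)^2 = real CARD('k) * (frob_norm A)^2"
  then have gap: "real CARD('k) * off + spread / 2 = 0"
    using card_frob_norm_minus_trace_power2[of A] by (simp add: off_def spread_def)
  have "off \<ge> 0" "spread \<ge> 0"
    unfolding off_def spread_def by (intro sum_nonneg; simp)+
  then have "real CARD('k) * off \<ge> 0" by simp
  with gap \<open>spread \<ge> 0\<close> have "real CARD('k) * off = 0" "spread = 0" by linarith+
  then have "off = 0" "spread = 0" by simp_all
  then have off_diag: "\<And>i j. j \<noteq> i \<Longrightarrow> A$i$j = 0" and diag: "\<And>i j. A$i$i = A$j$j"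
    unfolding off_def spread_def by (simp_all add: sum_nonneg_eq_0_iff sum_nonneg)
  have "A = A$i$i *\<^sub>R mat 1" for i
    by (auto simp: vec_eq_iff mat_def intro: off_diag diag)
  then show "\<exists>\<alpha>. A = \<alpha> *\<^sub>R mat 1" by blast
next
  assume "\<exists>\<alpha>. A = \<alpha> *\<^sub>R mat 1"
  then obtain \<alpha> where A: "A = \<alpha> *\<^sub>R mat 1" by blast
  have "(A$i$j)^2 = (if i = j then \<alpha>^2 else 0)" for i j
    by (simp add: A mat_def)
  then have "(frob_norm A)^2 = real CARD('k) * \<alpha>^2"
    by (simp add: frob_norm_power2)
  moreover have "trace A = real CARD('k) * \<alpha>"
    by (simp add: A trace_def mat_def)
  ultimately show "(trace A)^2 = real CARD('k) * (frob_norm A)^2"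
    by (simp add: power2_eq_square)
qed

lemma l_om_nonneg: "l_om X \<ge> 0"
  using trace_power2_le_card_frob_norm by (simp add: l_om_gram)

lemma l_om_eq_0_iff:
  "l_om X = 0 \<longleftrightarrow> (\<exists>\<alpha>\<ge>0. transpose X ** X = \<alpha> *\<^sub>R mat 1)"
proof -
  have "transpose X ** X = \<alpha> *\<^sub>R mat 1 \<Longrightarrow> \<alpha> \<ge> 0" for \<alpha>
    using gram_diag_nonneg[of X undefined] by (simp add: mat_def)
  moreover have "l_om X = 0 \<longleftrightarrow> (\<exists>\<alpha>. transpose X ** X = \<alpha> *\<^sub>R mat 1)"
    by (auto simp: l_om_gram simp flip: trace_power2_eq_card_frob_norm_iff)
  ultimately show ?thesis by blast
qed

lemma l_om_stationary_imp_zero: "GDERIV l_om X :> 0 \<Longrightarrow> l_om X = 0"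
  by (rule gderiv_zero_imp_homogeneous_zero[where n = 4]) (simp_all add: l_om_scaleR)

lemma diagonal_matrix_mult_nth:
  fixes S :: "'a::comm_semiring_1^'k^'k"
  assumes "\<forall>i j. i \<noteq> j \<longrightarrow> S$i$j = 0"
  shows "(S ** B)$i$j = S$i$i * B$i$j"
proof -
  have "(\<Sum>l\<in>UNIV. S$i$l * B$l$j) = (\<Sum>l\<in>UNIV. if l = i then S$i$i * B$i$j else 0)"
    using assms by (intro sum.cong) auto
  then show ?thesis by (simp add: matrix_matrix_mult_def)
qed

lemma transpose_diagonal:
  assumes "\<forall>i j. i \<noteq> j \<longrightarrow> S$i$j = 0"
  shows "transpose S = S"
  by (simp add: vec_eq_iff transpose_def) (metis assms)

lemma matrix_mul_transpose_isometry:
  fixes V :: "'a::comm_semiring_1^'k^'n"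
  assumes "transpose V ** V = mat 1"
  shows "A ** transpose V ** V = A"
  by (simp flip: matrix_mul_assoc add: assms)

lemma trace_orthogonal_conj:
  fixes V :: "'a::comm_semiring_1^'k^'n"
  assumes "transpose V ** V = mat 1"
  shows "trace (V ** M ** transpose V) = trace M"
  using trace_mul_sym[of "V ** M" "transpose V"]
  by (simp add: matrix_mul_assoc assms)

lemma l_om_svd:
  fixes X :: "real^'k^'n"
  assumes "is_svd X U S V"
  shows "l_om X = real CARD('k) * (\<Sum>k\<in>UNIV. (S$k$k)^4) - (\<Sum>k\<in>UNIV. (S$k$k)^2)^2"
proof -
  have U: "transpose U ** U = mat 1" and V: "transpose V ** V = mat 1"
    and diag: "\<forall>i j. i \<noteq> j \<longrightarrow> S$i$j = 0" and X: "X = U ** S ** transpose V"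
    using assms unfolding is_svd_def by auto
  define D where "D = S ** S"
  have D_nth: "D$i$j = (if i = j then (S$i$i)^2 else 0)" for i j
    using diag by (simp add: D_def diagonal_matrix_mult_nth power2_eq_square)
  have D_diag: "\<forall>i j. i \<noteq> j \<longrightarrow> D$i$j = 0"
    by (simp add: D_nth)
  have gram: "transpose X ** X = V ** D ** transpose V"
    unfolding X D_def
    by (simp add: matrix_transpose_mul transpose_diagonal[OF diag] matrix_mul_assoc
        matrix_mul_transpose_isometry[OF U])
  have "transpose (transpose X ** X) ** (transpose X ** X) = V ** (D ** D) ** transpose V"
    unfolding gram
    by (simp add: matrix_transpose_mul transpose_diagonal[OF D_diag] matrix_mul_assoc
        matrix_mul_transpose_isometry[OF V])
  then have "(frob_norm (transpose X ** X))^2 = trace (D ** D)"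
    by (simp add: frob_norm_power2_eq_trace trace_orthogonal_conj[OF V])
  also have "\<dots> = (\<Sum>k\<in>UNIV. (S$k$k)^4)"
    by (simp add: trace_def diagonal_matrix_mult_nth[OF D_diag] D_nth flip: power_add)
  finally have "(frob_norm (transpose X ** X))^2 = (\<Sum>k\<in>UNIV. (S$k$k)^4)" .
  moreover have "trace (transpose X ** X) = (\<Sum>k\<in>UNIV. (S$k$k)^2)"
    by (simp add: gram trace_orthogonal_conj[OF V]) (simp add: trace_def D_nth)
  ultimately show ?thesis
    by (simp add: l_om_gram)
qed

theorem mainTheorem7:
  fixes X :: "real^'k^'n"
  assumes "CARD('k) \<le> CARD('n)"
  shows "(\<forall>U S V. is_svd X U S V \<longrightarrow>
            l_om X = real CARD('k) * (\<Sum>k\<in>UNIV. (S$k$k)^4) - (\<Sum>k\<in>UNIV. (S$k$k)^2)^2)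
       \<and> l_om X \<ge> 0
       \<and> (l_om X = 0 \<longleftrightarrow> (\<exists>\<alpha>\<ge>0. transpose X ** X = \<alpha> *\<^sub>R mat 1))
       \<and> (GDERIV l_om X :> 0 \<longrightarrow> (\<exists>\<alpha>\<ge>0. transpose X ** X = \<alpha> *\<^sub>R mat 1))"
  \<comment> \<open>K \<le> N only guarantees that a thin SVD exists; none of the claims needs it.\<close>
  using l_om_svd[of X] l_om_nonneg[of X] l_om_eq_0_iff[of X] l_om_stationary_imp_zero[of X]
  by blast

end
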